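(* Let $M$ be a canonical linear LV-SEM-ME satisfying Conventional faithfulness and Minimality, with mixing matrix $\mathbf W^*$. Then: (a) An mleaf variable and a measured cogent variable belong to the same ancestral ordered group if and only if the two rows of $\mathbf W^*$ corresponding to these variables have the same support. Further, for any cogent variable $V_i$ and any descendant $V_j$ of $V_i$, the support of the row of $V_i$ is a subset of the support of the row of $V_j$. (b) An unobserved variable and a cogent variable belong to the same ancestral ordered group if and only if the two columns of $\mathbf W^*$ corresponding to their exogenous noise terms have the same support. Further, for any cogent variable $V_i$ and any ancestor $V_j$ of $V_i$, the support of the column of $N_{V_i}$ is a subset of the support of the column of $N_{V_j}$.
   Context: Model. A linear LV-SEM-ME has a finite set of variables $\mathcal V$ and a set of measurements $\mathcal X$. The variables in $\mathcal V$ admit a causal order; each $V_i\in\mathcal V$ satisfies $V_i=\sum_{V_j\in Pa(V_i)} a_{ij}V_j+N_{V_i}$ with $Pa(V_i)\subseteq\mathcal V$ its direct parents and jointly independent exogenous noises. $\mathcal V$ is partitioned into $\mathcal Y$ (observed without error), $\mathcal Z$ (measured with error) and $\mathcal H$ (unobserved). Each $Z_i\in\mathcal Z$ has one measurement $X_i=Z_i+N_{X_i}$ with independent errors. The causal diagram is the DAG on $\mathcal V\cup\mathcal X$ with an edge $W_1\to W_2$ iff $W_1$ is a direct parent of $W_2$. An mleaf variable is a $Z_i\in\mathcal Z$ whose only child is $X_i$; $\mathcal Z^L$ is their set. A cogent variable is a variable of $\mathcal Z\cup\mathcal Y$ that is not mleaf; $\mathcal V^C$ is their set. The model is canonical if every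 $H\in\mathcal H$ has no parents and at least two children, and every mleaf variable has zero exogenous noise. Observability indicators record which observed coordinates are in $\mathcal Y$ and which in $\mathcal X$. Mixing matrices. $\mathbf W^*$ has rows indexed by $\mathcal Z\cup\mathcal Y$ and columns by the noises of $\mathcal H\cup\mathcal V^C$; the entry (row $V$, column $N_U$) is the total causal effect of $U$ on $V$ ($1$ if $U=V$). The overall mixing matrix $\mathbf W=[\mathbf W^*,\,[\mathbf I;\mathbf 0]]$ maps all independent noises (identity block = measurement errors) to $(X,Y)$. Assumptions. Conventional faithfulness: the total causal effect of any $V_i\in\mathcal V$ on any of its descendants is nonzero. Minimality: there is no other linear LV-SEM-ME with strictly fewer unobserved variables, the same observability indicators and the same mixing matrix up to permutation and scaling of columns. AOG. The ancestral ordered grouping is the partition of $\mathcal H\cup\mathcal Z^L\cup\mathcal V^C$: each cogent variable in its own group; each mleaf $Z_j$ that has a measured cogent parent $Z_i$ such that $Z_j$ has no other parents or all other parents of $Z_j$ are ancestors of $Z_i$ is put in the group of $Z_i$, otherwise in a separate group; each $H_j\in\mathcal H$ that has a cogent child $V_i$ such that all other children of $H_j$ are descendants of $V_i$ is put in the group of $V_i$, otherwise in a separate group. The groups are called ancestral ordered groups. *)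

theory Defs
  imports Complex_Main
begin

text \<open>Variables live in a type 'v.
  vars: the finite set V of variables; hid = H (unobserved), meas = Z (measured
  with error; each z in Z has its own measurement X_z, identified by the label z),
  obs = Y (observed without error).  par v = direct parents of v;
  coef j i = structural coefficient a_ij of parent j in the equation of i;
  zero_noise = set of variables whose exogenous noise is identically zero.\<close>

record 'v lvsem =
  vars :: "'v set"
  hid :: "'v set"
  meas :: "'v set"
  obs :: "'v set"
  par :: "'v \<Rightarrow> 'v set"
  coef :: "'v \<Rightarrow> 'v \<Rightarrow> real"
  zero_noise :: "'v set"

definition edges :: "'v lvsem \<Rightarrow> ('v \<times> 'v) set" where
  "edges M = {(u, w). w \<in> vars M \<and> u \<in> par M w}"

definition wf_model :: "'v lvsem \<Rightarrow> bool" where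
  "wf_model M \<longleftrightarrow> finite (vars M)
     \<and> vars M = hid M \<union> meas M \<union> obs M
     \<and> hid M \<inter> meas M = {} \<and> hid M \<inter> obs M = {} \<and> meas M \<inter> obs M = {}
     \<and> (\<forall>v \<in> vars M. par M v \<subseteq> vars M)
     \<and> (\<forall>v. v \<notin> vars M \<longrightarrow> par M v = {})
     \<and> zero_noise M \<subseteq> vars M
     \<and> acyclic (edges M)"

definition children :: "'v lvsem \<Rightarrow> 'v \<Rightarrow> 'v set" where
  "children M u = {w \<in> vars M. u \<in> par M w}"

definition is_desc :: "'v lvsem \<Rightarrow> 'v \<Rightarrow> 'v \<Rightarrow> bool" where
  "is_desc M u w \<longleftrightarrow> (u, w) \<in> (edges M)\<^sup>+"

text \<open>mleaf: measured variable whose only child (in the diagram) is its measurement,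
  i.e. it has no children among the variables V.\<close>
definition mleaf :: "'v lvsem \<Rightarrow> 'v set" where
  "mleaf M = {z \<in> meas M. children M z = {}}"

definition cogent :: "'v lvsem \<Rightarrow> 'v set" where
  "cogent M = (meas M \<union> obs M) - mleaf M"

definition dpaths :: "'v lvsem \<Rightarrow> 'v \<Rightarrow> 'v \<Rightarrow> 'v list set" where
  "dpaths M u w = {p. p \<noteq> [] \<and> distinct p \<and> set p \<subseteq> vars M
      \<and> (\<forall>i. Suc i < length p \<longrightarrow> p ! i \<in> par M (p ! Suc i))
      \<and> hd p = u \<and> last p = w}"

definition te :: "'v lvsem \<Rightarrow> 'v \<Rightarrow> 'v \<Rightarrow> real" where
  "te M u w = (\<Sum>p \<in> dpaths M u w. \<Prod>i < length p - 1. coef M (p ! i) (p ! Suc i))"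

text \<open>Rows of W* are indexed by Z \<union> Y, columns by the noises N_u, u \<in> H \<union> V^C.\<close>
definition wcols :: "'v lvsem \<Rightarrow> 'v set" where
  "wcols M = hid M \<union> cogent M"

definition row_supp :: "'v lvsem \<Rightarrow> 'v \<Rightarrow> 'v set" where
  "row_supp M v = {u \<in> wcols M. te M u v \<noteq> 0}"

definition col_supp :: "'v lvsem \<Rightarrow> 'v \<Rightarrow> 'v set" where
  "col_supp M u = {r \<in> meas M \<union> obs M. te M u r \<noteq> 0}"

text \<open>Overall mixing matrix W = [W*, [I;0]]: columns Inl u (noise N_u, u in H \<union> V^C)
  and Inr z (measurement error of X_z, z in Z); rows indexed by Z \<union> Y.\<close>
definition mix_cols :: "'v lvsem \<Rightarrow> ('v + 'v) set" where
  "mix_cols M = Inl ` wcols M \<union> Inr ` meas M"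

definition mix_entry :: "'v lvsem \<Rightarrow> 'v \<Rightarrow> ('v + 'v) \<Rightarrow> real" where
  "mix_entry M r k = (case k of Inl u \<Rightarrow> te M u r
                               | Inr z \<Rightarrow> (if r = z then 1 else 0))"

text \<open>Same mixing matrix up to permutation and (nonzero) scaling of columns; both models
  have the same observed coordinates (same Z, same Y), so rows are identified.\<close>
definition same_mixing_upto :: "'v lvsem \<Rightarrow> 'v lvsem \<Rightarrow> bool" where
  "same_mixing_upto M M' \<longleftrightarrow>
     (\<exists>\<sigma> c. bij_betw \<sigma> (mix_cols M) (mix_cols M')
        \<and> (\<forall>k \<in> mix_cols M. c k \<noteq> (0::real)
              \<and> (\<forall>r \<in> meas M \<union> obs M. mix_entry M' r (\<sigma> k) = c k * mix_entry M r k)))"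

definition canonical :: "'v lvsem \<Rightarrow> bool" where
  "canonical M \<longleftrightarrow> (\<forall>h \<in> hid M. par M h = {} \<and> card (children M h) \<ge> 2)
                   \<and> mleaf M \<subseteq> zero_noise M"

definition conv_faithful :: "'v lvsem \<Rightarrow> bool" where
  "conv_faithful M \<longleftrightarrow> (\<forall>u \<in> vars M. \<forall>w. is_desc M u w \<longrightarrow> te M u w \<noteq> 0)"

definition minimal :: "'v lvsem \<Rightarrow> bool" where
  "minimal M \<longleftrightarrow> \<not> (\<exists>M'. wf_model M' \<and> meas M' = meas M \<and> obs M' = obs M
                        \<and> card (hid M') < card (hid M) \<and> same_mixing_upto M M')"

text \<open>AOG: w (mleaf or unobserved) is put into the group of cogent variable c.\<close>
definition attached :: "'v lvsem \<Rightarrow> 'v \<Rightarrow> 'v \<Rightarrow> bool" where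
  "attached M w c \<longleftrightarrow> c \<in> cogent M \<and>
     ((w \<in> mleaf M \<and> c \<in> meas M \<and> c \<in> par M w
        \<and> (\<forall>p \<in> par M w. p \<noteq> c \<longrightarrow> is_desc M p c))
    \<or> (w \<in> hid M \<and> c \<in> children M w
        \<and> (\<forall>d \<in> children M w. d \<noteq> c \<longrightarrow> is_desc M c d)))"

definition same_aog :: "'v lvsem \<Rightarrow> 'v \<Rightarrow> 'v \<Rightarrow> bool" where
  "same_aog M a b \<longleftrightarrow> a = b \<or>
     (\<exists>c \<in> cogent M. (a = c \<or> attached M a c) \<and> (b = c \<or> attached M b c))"

end

theory Submission
  imports Defs
begin

text \<open>Under faithfulness the support of a row of \<open>W*\<close> is the set of ancestors (reflexively)
  of its variable among the column indices, and the support of a column is the set of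
  descendants among the row indices.  Both parts then reduce to one fact about an acyclic
  relation: the strict ancestors of a node \<open>z\<close> coincide with the ancestors of \<open>v\<close> exactly when
  \<open>v\<close> is a parent of \<open>z\<close> and all other parents of \<open>z\<close> are ancestors of \<open>v\<close>.  Part (b) is
  the same fact for the reversed diagram.\<close>

lemma successively_hd_last_rtrancl:
  "xs \<noteq> [] \<Longrightarrow> successively (\<lambda>x y. (x, y) \<in> E) xs \<Longrightarrow> (hd xs, last xs) \<in> E\<^sup>*"
  by (induction xs) (auto simp: successively_Cons intro: converse_rtrancl_into_rtrancl)

lemma strict_ancestors_eq_ancestors_iff:
  assumes acyclic: "acyclic E" and parents: "{p. (p, z) \<in> E} \<subseteq> A" and "v \<in> A"
  shows "{u \<in> A. (u, z) \<in> E\<^sup>+} = {u \<in> A. (u, v) \<in> E\<^sup>*}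
    \<longleftrightarrow> (v, z) \<in> E \<and> (\<forall>p. (p, z) \<in> E \<longrightarrow> p \<noteq> v \<longrightarrow> (p, v) \<in> E\<^sup>+)"
proof
  assume eq: "{u \<in> A. (u, z) \<in> E\<^sup>+} = {u \<in> A. (u, v) \<in> E\<^sup>*}"
  have dominated: "(p, v) \<in> E\<^sup>+" if "(p, z) \<in> E" "p \<noteq> v" for p
    using eq parents that by (auto dest: rtranclD)
  have "(v, z) \<in> E\<^sup>+"
    using eq \<open>v \<in> A\<close> by blast
  then obtain p where p: "(p, z) \<in> E" "(v, p) \<in> E\<^sup>*"
    by (blast dest: tranclD2)
  have "p = v"
  proof (rule ccontr)
    assume "p \<noteq> v"
    have "(v, v) \<in> E\<^sup>+"
      using p(2) dominated[OF p(1) \<open>p \<noteq> v\<close>] by (rule rtrancl_trancl_trancl)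
    then show False
      using acyclic by (simp add: acyclic_def)
  qed
  then show "(v, z) \<in> E \<and> (\<forall>p. (p, z) \<in> E \<longrightarrow> p \<noteq> v \<longrightarrow> (p, v) \<in> E\<^sup>+)"
    using p dominated by blast
next
  assume "(v, z) \<in> E \<and> (\<forall>p. (p, z) \<in> E \<longrightarrow> p \<noteq> v \<longrightarrow> (p, v) \<in> E\<^sup>+)"
  then have vz: "(v, z) \<in> E" and dominated: "\<And>p. (p, z) \<in> E \<Longrightarrow> p \<noteq> v \<Longrightarrow> (p, v) \<in> E\<^sup>+"
    by blast+
  have "(u, z) \<in> E\<^sup>+ \<longleftrightarrow> (u, v) \<in> E\<^sup>*" for u
  proof
    assume "(u, z) \<in> E\<^sup>+"
    then obtain p where "(p, z) \<in> E" "(u, p) \<in> E\<^sup>*"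
      by (blast dest: tranclD2)
    then show "(u, v) \<in> E\<^sup>*"
      using dominated by (metis rtrancl_trans trancl_into_rtrancl)
  next
    assume "(u, v) \<in> E\<^sup>*"
    then show "(u, z) \<in> E\<^sup>+"
      using vz by (rule rtrancl_into_trancl1)
  qed
  then show "{u \<in> A. (u, z) \<in> E\<^sup>+} = {u \<in> A. (u, v) \<in> E\<^sup>*}"
    by blast
qed

lemma wf_model_vars: "wf_model M \<Longrightarrow> vars M = hid M \<union> meas M \<union> obs M"
  by (simp add: wf_model_def)

lemma wf_model_hid_disjoint: "wf_model M \<Longrightarrow> hid M \<inter> (meas M \<union> obs M) = {}"
  by (auto simp: wf_model_def)

lemma acyclic_edges: "wf_model M \<Longrightarrow> acyclic (edges M)"
  by (simp add: wf_model_def)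

lemma edges_in_vars:
  assumes "wf_model M" and "(u, w) \<in> edges M"
  shows "u \<in> vars M" "w \<in> vars M"
  using assms unfolding wf_model_def edges_def by blast+

lemma dpaths_rtrancl: "p \<in> dpaths M u w \<Longrightarrow> (u, w) \<in> (edges M)\<^sup>*"
  using successively_hd_last_rtrancl[of p "edges M"]
  by (auto simp: dpaths_def edges_def successively_conv_nth subset_iff)

lemma dpaths_self:
  assumes "u \<in> vars M"
  shows "dpaths M u u = {[u]}"
proof -
  have "p = [u]" if "p \<in> dpaths M u u" for p
  proof (cases p)
    case (Cons x q)
    with that have "x = u" "u \<notin> set q" "q = [] \<or> last q = u"
      by (auto simp: dpaths_def split: if_splits)
    then show "p = [u]"
      using Cons by (metis last_in_set)
  qed (use that in \<open>simp add: dpaths_def\<close>)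
  moreover have "[u] \<in> dpaths M u u"
    using assms by (simp add: dpaths_def)
  ultimately show ?thesis
    by blast
qed

lemma te_self: "u \<in> vars M \<Longrightarrow> te M u u = 1"
  by (simp add: te_def dpaths_self)

lemma te_nonzero_iff:
  assumes "wf_model M" and "conv_faithful M"
  shows "te M u w \<noteq> 0 \<longleftrightarrow> u \<in> vars M \<and> (u, w) \<in> (edges M)\<^sup>*"
proof
  assume nonzero: "te M u w \<noteq> 0"
  have "dpaths M u w \<noteq> {}"
  proof
    assume "dpaths M u w = {}"
    then show False
      using nonzero by (simp add: te_def)
  qed
  then obtain p where p: "p \<in> dpaths M u w"
    by blast
  then have "p \<noteq> []" "set p \<subseteq> vars M" "hd p = u"
    by (simp_all add: dpaths_def)
  then have "u \<in> vars M"
    using hd_in_set by blast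
  then show "u \<in> vars M \<and> (u, w) \<in> (edges M)\<^sup>*"
    using dpaths_rtrancl[OF p] by blast
next
  assume "u \<in> vars M \<and> (u, w) \<in> (edges M)\<^sup>*"
  then show "te M u w \<noteq> 0"
    using assms(2) te_self[of u M]
    unfolding conv_faithful_def is_desc_def rtrancl_eq_or_trancl by fastforce
qed

lemma wcols_subset_vars: "wf_model M \<Longrightarrow> wcols M \<subseteq> vars M"
  using wf_model_vars[of M] by (auto simp: wcols_def cogent_def)

lemma row_supp_eq_ancestors:
  assumes "wf_model M" and "conv_faithful M"
  shows "row_supp M w = {u \<in> wcols M. (u, w) \<in> (edges M)\<^sup>*}"
  using te_nonzero_iff[OF assms] wcols_subset_vars[OF assms(1)] by (auto simp: row_supp_def)

lemma col_supp_eq_descendants: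
  assumes "wf_model M" and "conv_faithful M" and "u \<in> vars M"
  shows "col_supp M u = {r \<in> meas M \<union> obs M. (u, r) \<in> (edges M)\<^sup>*}"
  using te_nonzero_iff[OF assms(1,2)] assms(3) by (auto simp: col_supp_def)

lemma row_supp_mono:
  assumes "wf_model M" and "conv_faithful M" and "is_desc M v w"
  shows "row_supp M v \<subseteq> row_supp M w"
  using assms(3) by (auto simp: row_supp_eq_ancestors[OF assms(1,2)] is_desc_def)

lemma col_supp_antimono:
  assumes "wf_model M" and "conv_faithful M" and "is_desc M u v"
  shows "col_supp M v \<subseteq> col_supp M u"
proof -
  have "(u, v) \<in> (edges M)\<^sup>+"
    using assms(3) by (simp add: is_desc_def)
  moreover from this have "u \<in> vars M" "v \<in> vars M"
    using edges_in_vars[OF assms(1)] by (auto elim: tranclE converse_tranclE)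
  ultimately show ?thesis
    by (auto simp: col_supp_eq_descendants[OF assms(1,2)])
qed

lemma same_aog_cogent_iff_attached:
  assumes wf: "wf_model M" and w: "w \<notin> cogent M" and v: "v \<in> cogent M"
  shows "same_aog M w v \<longleftrightarrow> attached M w v"
proof -
  have "v \<notin> mleaf M" "v \<notin> hid M"
    using v wf_model_hid_disjoint[OF wf] by (auto simp: cogent_def)
  then have "\<not> attached M v c" for c
    by (simp add: attached_def)
  then show ?thesis
    using w v by (auto simp: same_aog_def)
qed

lemma mleaf_same_aog_iff_row_supp_eq:
  assumes wf: "wf_model M" and cf: "conv_faithful M"
    and z: "z \<in> mleaf M" and v: "v \<in> cogent M \<inter> meas M"
  shows "same_aog M z v \<longleftrightarrow> row_supp M z = row_supp M v"
proof -
  have z_vars: "z \<in> vars M" and z_not_hid: "z \<notin> hid M" and z_not_cogent: "z \<notin> cogent M"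
    using z wf_model_vars[OF wf] wf_model_hid_disjoint[OF wf] by (auto simp: mleaf_def cogent_def)
  have row_z: "row_supp M z = {u \<in> wcols M. (u, z) \<in> (edges M)\<^sup>+}"
    using z_vars z_not_hid z_not_cogent
    by (auto simp: row_supp_eq_ancestors[OF wf cf] wcols_def dest: rtranclD)
  have parents: "{p. (p, z) \<in> edges M} \<subseteq> wcols M"
  proof
    fix p
    assume "p \<in> {p. (p, z) \<in> edges M}"
    then have edge: "(p, z) \<in> edges M"
      by simp
    have "z \<in> children M p"
      using edge by (simp add: edges_def children_def)
    then have "p \<in> vars M" "p \<notin> mleaf M"
      using edges_in_vars(1)[OF wf edge] by (auto simp: mleaf_def)
    then show "p \<in> wcols M"
      using wf_model_vars[OF wf] by (auto simp: wcols_def cogent_def)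
  qed
  have v_col: "v \<in> wcols M"
    using v by (simp add: wcols_def)
  have "same_aog M z v \<longleftrightarrow> attached M z v"
    using same_aog_cogent_iff_attached[OF wf z_not_cogent] v by blast
  also have "\<dots> \<longleftrightarrow>
      (v, z) \<in> edges M \<and> (\<forall>p. (p, z) \<in> edges M \<longrightarrow> p \<noteq> v \<longrightarrow> (p, v) \<in> (edges M)\<^sup>+)"
    using z v z_vars z_not_hid by (simp add: attached_def is_desc_def edges_def Ball_def)
  also have "\<dots> \<longleftrightarrow> {u \<in> wcols M. (u, z) \<in> (edges M)\<^sup>+} = {u \<in> wcols M. (u, v) \<in> (edges M)\<^sup>*}"
    by (rule strict_ancestors_eq_ancestors_iff[OF acyclic_edges[OF wf] parents v_col, symmetric])
  also have "\<dots> \<longleftrightarrow> row_supp M z = row_supp M v"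
    by (simp only: row_z row_supp_eq_ancestors[OF wf cf, of v])
  finally show ?thesis .
qed

lemma hidden_same_aog_iff_col_supp_eq:
  assumes wf: "wf_model M" and canonical: "canonical M" and cf: "conv_faithful M"
    and h: "h \<in> hid M" and v: "v \<in> cogent M"
  shows "same_aog M h v \<longleftrightarrow> col_supp M h = col_supp M v"
proof -
  let ?E = "(edges M)\<inverse>"
  have h_vars: "h \<in> vars M" and h_not_row: "h \<notin> meas M \<union> obs M"
    using h wf_model_vars[OF wf] wf_model_hid_disjoint[OF wf] by auto
  have v_vars: "v \<in> vars M" and v_row: "v \<in> meas M \<union> obs M"
    using v wf_model_vars[OF wf] by (auto simp: cogent_def)
  have col_h: "col_supp M h = {r \<in> meas M \<union> obs M. (r, h) \<in> ?E\<^sup>+}"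
    using h_not_row
    by (auto simp: col_supp_eq_descendants[OF wf cf h_vars] trancl_converse rtrancl_eq_or_trancl)
  have col_v: "col_supp M v = {r \<in> meas M \<union> obs M. (r, v) \<in> ?E\<^sup>*}"
    by (auto simp: col_supp_eq_descendants[OF wf cf v_vars] rtrancl_converse)
  have children: "{d. (d, h) \<in> ?E} \<subseteq> meas M \<union> obs M"
  proof
    fix d
    assume "d \<in> {d. (d, h) \<in> ?E}"
    then have "d \<in> vars M" "d \<notin> hid M"
      using canonical h by (auto simp: edges_def canonical_def)
    then show "d \<in> meas M \<union> obs M"
      using wf_model_vars[OF wf] by auto
  qed
  have "h \<notin> cogent M"
    using h_not_row by (simp add: cogent_def)
  then have "same_aog M h v \<longleftrightarrow> attached M h v"
    using same_aog_cogent_iff_attached[OF wf] v by blast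
  also have "\<dots> \<longleftrightarrow> (v, h) \<in> ?E \<and> (\<forall>d. (d, h) \<in> ?E \<longrightarrow> d \<noteq> v \<longrightarrow> (d, v) \<in> ?E\<^sup>+)"
    using h v h_not_row
    by (auto simp: attached_def edges_def children_def is_desc_def trancl_converse mleaf_def)
  also have "\<dots> \<longleftrightarrow>
      {r \<in> meas M \<union> obs M. (r, h) \<in> ?E\<^sup>+} = {r \<in> meas M \<union> obs M. (r, v) \<in> ?E\<^sup>*}"
    using acyclic_edges[OF wf] children v_row
    by (intro strict_ancestors_eq_ancestors_iff[symmetric]) simp_all
  also have "\<dots> \<longleftrightarrow> col_supp M h = col_supp M v"
    by (simp only: col_h col_v)
  finally show ?thesis .
qed

theorem proposition4:
  fixes M :: "'v lvsem"
  assumes "wf_model M" and "canonical M" and "conv_faithful M" and "minimal M"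
  shows "(\<forall>z \<in> mleaf M. \<forall>v \<in> cogent M \<inter> meas M.
            same_aog M z v \<longleftrightarrow> row_supp M z = row_supp M v)
       \<and> (\<forall>vi \<in> cogent M. \<forall>vj. is_desc M vi vj \<longrightarrow> row_supp M vi \<subseteq> row_supp M vj)
       \<and> (\<forall>h \<in> hid M. \<forall>v \<in> cogent M.
            same_aog M h v \<longleftrightarrow> col_supp M h = col_supp M v)
       \<and> (\<forall>vi \<in> cogent M. \<forall>vj. is_desc M vj vi \<longrightarrow> col_supp M vi \<subseteq> col_supp M vj)"
  using mleaf_same_aog_iff_row_supp_eq[OF assms(1,3)] row_supp_mono[OF assms(1,3)]
    hidden_same_aog_iff_col_supp_eq[OF assms(1-3)] col_supp_antimono[OF assms(1,3)]
  by blast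

end
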